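(* Let $m\ge1$, $\mu>0$, $\sigma\ge0$, $r=\sigma/\mu$, and let $B$ be the mechanism that offers the bundle of all $m$ items at a single random price drawn from the log-lottery $P^{\log}_{m\mu,\sqrt m\sigma}$. Then for every product distribution $F=F_1\times\cdots\times F_m$ in which each $F_j$ has mean $\mu$ and standard deviation at most $\sigma$, \[\frac{\mathrm{OPT}(F)}{\mathrm{REV}(B;F)}\le\rho\!\left(\frac{r}{\sqrt m}\right).\]
   Context: One buyer with additive valuation for $m$ items with values $(v_1,\dots,v_m)\sim F$ on $\mathbb{R}^m_{\ge0}$. A mechanism is a pair $(x,\pi)$ with $x:\mathbb{R}^m_{\ge0}\to[0,1]^m$, $\pi:\mathbb{R}^m_{\ge0}\to\mathbb{R}_{\ge0}$; it is truthful if $x(\vec v)\cdot\vec v-\pi(\vec v)\ge x(\vec w)\cdot\vec v-\pi(\vec w)$ and $x(\vec v)\cdot\vec v-\pi(\vec v)\ge0$ for all $\vec v,\vec w$. $\mathrm{REV}(A;F)=\mathbb{E}_{\vec v\sim F}[\pi(\vec v)]$, $\mathrm{OPT}(F)$ is the supremum of $\mathrm{REV}$ over truthful mechanisms. The bundle mechanism sells all items iff $\sum_jv_j$ is at least the drawn price. For $\mu'>0,\sigma'\ge0$, the log-lottery $P^{\log}_{\mu',\sigma'}$ is the random price on $[\pi_1,\pi_2]$ with cdf $x\mapsto\frac{\pi_2\ln(x/\pi_1)-(x-\pi_1)}{\pi_2\ln(\pi_2/\pi_1)-(\pi_2-\pi_1)}$, where $\pi_1,\pi_2$ are the unique solutions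 of $\pi_1(1+\ln(\pi_2/\pi_1))=\mu'$, $\pi_1(2\pi_2-\pi_1)=\mu'^2+\sigma'^2$ (for $\sigma'=0$, the deterministic price $\mu'$). For $s\ge0$, $\rho(s)$ is the unique positive solution $\rho$ of $\frac{1}{\rho^2}(2e^{\rho-1}-1)=s^2+1$. *)

theory Defs
  imports "HOL-Probability.Probability"
begin

definition vals :: "nat \<Rightarrow> (nat \<Rightarrow> real) set" where
  "vals m = PiE {..<m} (\<lambda>_. {0..})"

text \<open>A mechanism is a pair (allocation, payment).\<close>
type_synonym mechanism = "((nat \<Rightarrow> real) \<Rightarrow> nat \<Rightarrow> real) \<times> ((nat \<Rightarrow> real) \<Rightarrow> real)"

definition truthful :: "nat \<Rightarrow> mechanism \<Rightarrow> bool" where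
  "truthful m A = (let x = fst A; p = snd A in
     (\<forall>v\<in>vals m. (\<forall>j<m. 0 \<le> x v j \<and> x v j \<le> 1) \<and> 0 \<le> p v
        \<and> (\<Sum>j<m. x v j * v j) - p v \<ge> 0
        \<and> (\<forall>w\<in>vals m. (\<Sum>j<m. x v j * v j) - p v \<ge> (\<Sum>j<m. x w j * v j) - p w)))"

definition REV :: "(nat \<Rightarrow> real) measure \<Rightarrow> mechanism \<Rightarrow> ennreal" where
  "REV M A = (\<integral>\<^sup>+ v. ennreal (snd A v) \<partial>M)"

definition OPT :: "nat \<Rightarrow> (nat \<Rightarrow> real) measure \<Rightarrow> ennreal" where
  "OPT m M = (SUP A \<in> {A. truthful m A \<and> snd A \<in> borel_measurable M}. REV M A)"

text \<open>Bundle mechanism at a random price drawn from P: all items sold iff the sum of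
  values is at least the drawn price; expressed as a lottery mechanism.\<close>
definition bundle_mech :: "nat \<Rightarrow> real measure \<Rightarrow> mechanism" where
  "bundle_mech m P =
     (\<lambda>v j. measure P {..(\<Sum>i<m. v i)},
      \<lambda>v. \<integral>p. (if p \<le> (\<Sum>i<m. v i) then p else 0) \<partial>P)"

definition loglot_pts :: "real \<Rightarrow> real \<Rightarrow> real \<times> real" where
  "loglot_pts \<mu> \<sigma> = (THE (a, b). 0 < a \<and> 0 < b \<and> a * (1 + ln (b / a)) = \<mu>
                                 \<and> a * (2 * b - a) = \<mu>\<^sup>2 + \<sigma>\<^sup>2)"

definition loglot_cdf :: "real \<Rightarrow> real \<Rightarrow> real \<Rightarrow> real" where
  "loglot_cdf \<mu> \<sigma> x = (case loglot_pts \<mu> \<sigma> of (a, b) \<Rightarrow>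
      if x < a then 0
      else if x \<le> b then (b * ln (x / a) - (x - a)) / (b * ln (b / a) - (b - a))
      else 1)"

definition log_lottery :: "real \<Rightarrow> real \<Rightarrow> real measure" where
  "log_lottery \<mu> \<sigma> = (if \<sigma> = 0 then return borel \<mu> else interval_measure (loglot_cdf \<mu> \<sigma>))"

definition rho :: "real \<Rightarrow> real" where
  "rho s = (THE r. 0 < r \<and> (2 * exp (r - 1) - 1) / r\<^sup>2 = s\<^sup>2 + 1)"

end

theory Submission
  imports Defs "HOL-Real_Asymp.Real_Asymp"
begin

(* OPT is at most the expected welfare E S, where S is the sum of the values and E S = m mu.
   The log-lottery on [a, b] has density proportional to b / p - 1, so a buyer of value s in
   [a, b] pays exactly the concave quadratic (b s - s^2/2 - (a b - a^2/2)) / N, N the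
   normalising constant, and this quadratic bounds the payment from below for every s. Its
   expectation only involves E S = m mu and E S^2 <= (m mu)^2 + m sigma^2, and for the
   endpoints a = m mu / u, b = a e^(u - 1) with u = rho (sigma / (mu sqrt m)) it equals a.
   Hence OPT <= u a <= u REV. *)

section \<open>The equation defining rho\<close>

(* With endpoints a and b = a e^(u - 1) the log-lottery has mean a u and second moment
   (a u)^2 moment_ratio u, so rho s is the solution of moment_ratio u = 1 + s^2. *)
definition moment_ratio :: "real \<Rightarrow> real" where
  "moment_ratio u = (2 * exp (u - 1) - 1) / u\<^sup>2"

lemma moment_ratio_1 [simp]: "moment_ratio 1 = 1"
  by (simp add: moment_ratio_def)

lemma exp_mult_diff_2_plus_1_pos:
  fixes u :: real
  assumes "u \<noteq> 1"
  shows "exp (u - 1) * (u - 2) + 1 > 0"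
proof (cases "u \<ge> 2")
  case False
  have "2 - u < exp (-(u - 1))"
    using exp_minus_greater[of "u - 1"] assms by simp
  then have "exp (u - 1) * (2 - u) < exp (u - 1) * exp (-(u - 1))"
    by simp
  then show ?thesis
    by (simp add: algebra_simps flip: exp_add)
qed (simp add: add_nonneg_pos)

lemma has_real_derivative_moment_ratio:
  "u > 0 \<Longrightarrow> (moment_ratio has_real_derivative 2 * (exp (u - 1) * (u - 2) + 1) / u ^ 3) (at u)"
  unfolding moment_ratio_def
  by (rule derivative_eq_intros refl | simp)+ (simp add: field_simps eval_nat_numeral)

lemma continuous_on_moment_ratio: "0 < a \<Longrightarrow> continuous_on {a..b} moment_ratio"
  by (intro continuous_at_imp_continuous_on ballI) (auto intro!: DERIV_isCont has_real_derivative_moment_ratio)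

lemma moment_ratio_less_same_side_of_1:
  assumes "0 < a" "a < b" "1 \<le> a \<or> b \<le> 1"
  shows "moment_ratio a < moment_ratio b"
proof (rule DERIV_pos_imp_increasing_open[OF \<open>a < b\<close> _ continuous_on_moment_ratio[OF \<open>0 < a\<close>]])
  fix x assume "a < x" "x < b"
  with assms have "x \<noteq> 1" "x > 0" by auto
  then show "\<exists>y. (moment_ratio has_real_derivative y) (at x) \<and> 0 < y"
    using has_real_derivative_moment_ratio[of x] exp_mult_diff_2_plus_1_pos[of x] by auto
qed

lemma moment_ratio_strict_mono_on: "strict_mono_on {0<..} moment_ratio"
proof (rule strict_mono_onI)
  fix a b :: real assume "a \<in> {0<..}" "a < b"
  then show "moment_ratio a < moment_ratio b"
    using moment_ratio_less_same_side_of_1[of a 1] moment_ratio_less_same_side_of_1[of 1 b]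
      moment_ratio_less_same_side_of_1[of a b]
    by (cases "1 \<le> a \<or> b \<le> 1") auto
qed

lemma moment_ratio_at_top: "filterlim moment_ratio at_top at_top"
  unfolding moment_ratio_def by real_asymp

lemma moment_ratio_attains:
  assumes "c \<ge> 1"
  obtains u where "u \<ge> 1" "moment_ratio u = c"
proof -
  have "\<forall>\<^sub>F u in at_top. 1 \<le> u \<and> c \<le> moment_ratio u"
    using moment_ratio_at_top by (intro eventually_conj eventually_ge_at_top) (simp add: filterlim_at_top)
  then obtain U where "\<forall>u\<ge>U. 1 \<le> u \<and> c \<le> moment_ratio u"
    unfolding eventually_at_top_linorder by blast
  then have "\<exists>u\<ge>1. u \<le> U \<and> moment_ratio u = c"
    using assms by (intro IVT' continuous_on_moment_ratio) auto
  then show ?thesis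
    using that by blast
qed

lemma rho_eqI:
  assumes "u > 0" "moment_ratio u = s\<^sup>2 + 1"
  shows "rho s = u"
  unfolding rho_def
proof (rule the_equality)
  show "0 < u \<and> (2 * exp (u - 1) - 1) / u\<^sup>2 = s\<^sup>2 + 1"
    using assms(1) assms(2)[unfolded moment_ratio_def] by (rule conjI)
next
  fix r assume r: "0 < r \<and> (2 * exp (r - 1) - 1) / r\<^sup>2 = s\<^sup>2 + 1"
  then have "moment_ratio r = moment_ratio u"
    unfolding assms(2) by (simp only: moment_ratio_def)
  with r assms(1) show "r = u"
    by (auto intro: strict_mono_on_eqD[OF moment_ratio_strict_mono_on])
qed

lemma moment_ratio_scaled:
  "u \<noteq> 0 \<Longrightarrow> a * (2 * (a * exp (u - 1)) - a) = (a * u)\<^sup>2 * moment_ratio u"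
  by (simp add: moment_ratio_def field_simps power2_eq_square)

lemma loglot_pts_eqI:
  assumes "0 < \<mu>" "0 < u" "moment_ratio u = 1 + (\<sigma> / \<mu>)\<^sup>2"
  shows "loglot_pts \<mu> \<sigma> = (\<mu> / u, \<mu> / u * exp (u - 1))"
  unfolding loglot_pts_def
proof (rule the_equality)
  have "\<mu> / u * (2 * (\<mu> / u * exp (u - 1)) - \<mu> / u) = (\<mu> / u * u)\<^sup>2 * moment_ratio u"
    using assms by (intro moment_ratio_scaled) simp
  also have "\<dots> = \<mu>\<^sup>2 + \<sigma>\<^sup>2"
    using assms by (simp add: field_simps power2_eq_square)
  finally show "case (\<mu> / u, \<mu> / u * exp (u - 1)) of (a, b) \<Rightarrow>
      0 < a \<and> 0 < b \<and> a * (1 + ln (b / a)) = \<mu> \<and> a * (2 * b - a) = \<mu>\<^sup>2 + \<sigma>\<^sup>2"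
    using assms by simp
next
  fix p assume "case p of (a, b) \<Rightarrow>
      0 < a \<and> 0 < b \<and> a * (1 + ln (b / a)) = \<mu> \<and> a * (2 * b - a) = \<mu>\<^sup>2 + \<sigma>\<^sup>2"
  then obtain a b where p: "p = (a, b)" and "0 < a" "0 < b"
    and mean: "a * (1 + ln (b / a)) = \<mu>" and second: "a * (2 * b - a) = \<mu>\<^sup>2 + \<sigma>\<^sup>2"
    by (cases p) auto
  define v where "v = 1 + ln (b / a)"
  have "v > 0"
    using mean \<open>0 < a\<close> \<open>0 < \<mu>\<close> unfolding v_def by (metis zero_less_mult_pos)
  have b: "b = a * exp (v - 1)" and a: "a = \<mu> / v"
    using \<open>0 < a\<close> \<open>0 < b\<close> mean \<open>v > 0\<close> by (simp_all add: v_def field_simps)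
  have "\<mu>\<^sup>2 * moment_ratio v = \<mu>\<^sup>2 + \<sigma>\<^sup>2"
    using second moment_ratio_scaled[of v a] \<open>v > 0\<close> by (simp add: b a)
  then have "moment_ratio v = moment_ratio u"
    unfolding assms(3) using \<open>0 < \<mu>\<close> by (simp add: field_simps power2_eq_square)
  then have "v = u"
    using \<open>v > 0\<close> \<open>u > 0\<close> by (auto intro: strict_mono_on_eqD[OF moment_ratio_strict_mono_on])
  then show "p = (\<mu> / u, \<mu> / u * exp (u - 1))"
    using p a b by simp
qed

section \<open>The log-lottery as a density\<close>

lemma integral_indicator_FTC_real:
  fixes f F :: "real \<Rightarrow> real"
  assumes "a \<le> c"
    and deriv: "\<And>x. a \<le> x \<Longrightarrow> x \<le> c \<Longrightarrow> (F has_real_derivative f x) (at x)"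
    and cont: "continuous_on {a..c} f"
  shows "integrable lborel (\<lambda>y. indicator {a..c} y * f y)"
    and "(\<integral>y. indicator {a..c} y * f y \<partial>lborel) = F c - F a"
proof -
  show "integrable lborel (\<lambda>y. indicator {a..c} y * f y)"
    using borel_integrable_atLeastAtMost'[OF cont] by (simp add: set_integrable_def)
  have "(\<integral>y. indicator {a..c} y *\<^sub>R f y \<partial>lborel) = F c - F a"
    using deriv by (intro integral_FTC_atLeastAtMost[OF \<open>a \<le> c\<close> _ cont])
      (simp add: has_real_derivative_iff_has_vector_derivative has_vector_derivative_at_within)
  then show "(\<integral>y. indicator {a..c} y * f y \<partial>lborel) = F c - F a"
    by simp
qed

definition loglot_norm :: "real \<Rightarrow> real \<Rightarrow> real" where
  "loglot_norm a b = b * ln (b / a) - (b - a)"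

(* The density is the derivative of loglot_cdf on [a, b]. *)
definition loglot_measure :: "real \<Rightarrow> real \<Rightarrow> real measure" where
  "loglot_measure a b =
     density lborel (\<lambda>y. ennreal (indicator {a..b} y * ((b / y - 1) / loglot_norm a b)))"

lemma loglot_norm_pos:
  assumes "0 < a" "a < b"
  shows "loglot_norm a b > 0"
proof -
  have "b * (ln a - ln b) < a - b"
    using ln_diff_less[of a b] assms by (simp add: field_simps)
  then show ?thesis
    using assms by (simp add: loglot_norm_def ln_div algebra_simps)
qed

lemma loglot_cdf_numerator_nonneg:
  fixes a b x :: real
  assumes "0 < a" "a \<le> x" "x \<le> b"
  shows "0 \<le> b * ln (x / a) - (x - a)"
proof -
  have "ln (a / x) \<le> a / x - 1"
    using ln_le_minus_one[of "a / x"] assms by simp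
  then have "b * (1 - a / x) \<le> b * ln (x / a)"
    using assms by (intro mult_left_mono) (auto simp: ln_div)
  moreover have "x - a \<le> b * (1 - a / x)"
  proof -
    have "x * (x - a) \<le> b * (x - a)"
      using assms by (intro mult_right_mono) auto
    then show ?thesis
      using assms by (simp add: field_simps algebra_simps)
  qed
  ultimately show ?thesis
    by linarith
qed

lemma nn_integral_loglot_density:
  assumes "0 < a" "a < b" "a \<le> c" "c \<le> b"
  shows "(\<integral>\<^sup>+y. ennreal (indicator {a..c} y * ((b / y - 1) / loglot_norm a b)) \<partial>lborel)
    = ennreal ((b * ln (c / a) - (c - a)) / loglot_norm a b)"
proof -
  let ?N = "loglot_norm a b"
  have N: "?N > 0"
    using loglot_norm_pos assms by blast
  have deriv: "((\<lambda>y. (b * ln (y / a) - (y - a)) / ?N) has_real_derivative (b / x - 1) / ?N) (at x)"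
    if "a \<le> x" for x
    using that assms N by (auto intro!: derivative_eq_intros simp: field_simps)
  have cont: "continuous_on {a..c} (\<lambda>y. (b / y - 1) / ?N)"
    using assms N by (intro continuous_intros) auto
  have "0 \<le> b / y - 1" if "a \<le> y" "y \<le> c" for y
    using that assms by (simp add: field_simps)
  then have nonneg: "0 \<le> indicator {a..c} y * ((b / y - 1) / ?N)" for y
    using N by (simp add: indicator_def)
  note FTC = integral_indicator_FTC_real[OF \<open>a \<le> c\<close> deriv cont]
  show ?thesis
    using FTC assms N nonneg by (subst nn_integral_eq_integral) (auto intro!: AE_I2)
qed

lemma emeasure_loglot_measure_atMost:
  assumes "0 < a" "a < b"
  shows "emeasure (loglot_measure a b) {..x} = ennreal
    (if x < a then 0 else if x \<le> b then (b * ln (x / a) - (x - a)) / loglot_norm a b else 1)"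
proof -
  have "emeasure (loglot_measure a b) {..x}
      = (\<integral>\<^sup>+y. ennreal (indicator {a..b} y * ((b / y - 1) / loglot_norm a b)) * indicator {..x} y \<partial>lborel)"
    unfolding loglot_measure_def by (subst emeasure_density) auto
  also have "\<dots> = (\<integral>\<^sup>+y. ennreal (if x < a then 0
      else indicator {a..min x b} y * ((b / y - 1) / loglot_norm a b)) \<partial>lborel)"
    by (intro nn_integral_cong) (auto simp: indicator_def)
  also have "\<dots> = ennreal
    (if x < a then 0 else if x \<le> b then (b * ln (x / a) - (x - a)) / loglot_norm a b else 1)"
    using assms loglot_norm_pos[OF assms] nn_integral_loglot_density[OF assms, of "min x b"]
    by (auto simp: min_def loglot_norm_def)
  finally show ?thesis .
qed

lemma real_distribution_loglot_measure:
  assumes "0 < a" "a < b"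
  shows "real_distribution (loglot_measure a b)"
proof -
  have "emeasure (loglot_measure a b) UNIV
      = (\<integral>\<^sup>+y. ennreal (indicator {a..b} y * ((b / y - 1) / loglot_norm a b)) \<partial>lborel)"
    unfolding loglot_measure_def by (subst emeasure_density) auto
  also have "\<dots> = 1"
    using nn_integral_loglot_density[OF assms less_imp_le[OF assms(2)] order.refl] assms loglot_norm_pos[OF assms]
    by (simp add: loglot_norm_def)
  finally show ?thesis
    unfolding real_distribution_def real_distribution_axioms_def
    by (auto intro!: prob_spaceI simp: loglot_measure_def)
qed

lemma log_lottery_eq_loglot_measure:
  assumes "\<sigma> \<noteq> 0" "loglot_pts \<mu> \<sigma> = (a, b)" "0 < a" "a < b"
  shows "log_lottery \<mu> \<sigma> = loglot_measure a b"
proof -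
  let ?G = "loglot_cdf \<mu> \<sigma>"
  interpret P: real_distribution "loglot_measure a b"
    using real_distribution_loglot_measure assms(3,4) .
  have cdf: "cdf (loglot_measure a b) = ?G"
  proof
    fix x
    have "cdf (loglot_measure a b) x = enn2real (emeasure (loglot_measure a b) {..x})"
      by (simp add: cdf_def measure_def)
    then show "cdf (loglot_measure a b) x = ?G x"
      using emeasure_loglot_measure_atMost[OF assms(3,4)] loglot_cdf_numerator_nonneg[of a x b]
        loglot_norm_pos[OF assms(3,4)] assms
      by (simp add: loglot_cdf_def loglot_norm_def)
  qed
  have mono: "\<And>x y. x \<le> y \<Longrightarrow> ?G x \<le> ?G y"
    and right_cont: "\<And>x. continuous (at_right x) ?G"
    and bot: "(?G \<longlongrightarrow> 0) at_bot" and top: "(?G \<longlongrightarrow> 1) at_top"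
    using P.cdf_nondecreasing P.cdf_is_right_cont P.cdf_lim_at_bot P.cdf_lim_at_top_prob
    unfolding cdf by auto
  have "interval_measure ?G = loglot_measure a b"
    using cdf_interval_measure[OF mono right_cont bot]
    by (intro cdf_unique real_distribution_interval_measure mono right_cont bot top)
      (simp_all add: cdf P.real_distribution_axioms)
  with assms(1) show ?thesis
    by (simp add: log_lottery_def)
qed

lemma integral_loglot_measure_payment:
  assumes "0 < a" "a < b"
  shows "(\<integral>p. (if p \<le> s then p else 0) \<partial>loglot_measure a b) = (if s < a then 0
    else (b * min s b - (min s b)\<^sup>2 / 2 - (b * a - a\<^sup>2 / 2)) / loglot_norm a b)"
proof -
  let ?N = "loglot_norm a b"
  let ?Q = "\<lambda>t. (b * t - t\<^sup>2 / 2) / ?N"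
  have N: "?N > 0"
    using loglot_norm_pos assms by blast
  have "(\<integral>p. (if p \<le> s then p else 0) \<partial>loglot_measure a b)
      = (\<integral>p. indicator {a..b} p * ((b / p - 1) / ?N) * (if p \<le> s then p else 0) \<partial>lborel)"
    unfolding loglot_measure_def using assms N
    by (subst integral_density) (auto simp: indicator_def field_simps intro!: AE_I2)
  also have "\<dots> = (\<integral>p. (if s < a then 0 else indicator {a..min s b} p * ((b - p) / ?N)) \<partial>lborel)"
    by (intro Bochner_Integration.integral_cong) (use assms in \<open>auto simp: indicator_def field_simps\<close>)
  also have "\<dots> = (if s < a then 0 else ?Q (min s b) - ?Q a)"
  proof (cases "s < a")
    case False
    then have "a \<le> min s b"
      using assms by simp
    moreover have "(?Q has_real_derivative (b - x) / ?N) (at x)" if "a \<le> x" "x \<le> min s b" for x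
      using N by (auto intro!: derivative_eq_intros simp: field_simps)
    moreover have "continuous_on {a..min s b} (\<lambda>p. (b - p) / ?N)"
      using N by (intro continuous_intros) auto
    ultimately have "(\<integral>p. indicator {a..min s b} p * ((b - p) / ?N) \<partial>lborel) = ?Q (min s b) - ?Q a"
      by (rule integral_indicator_FTC_real(2))
    with False show ?thesis
      by simp
  qed simp
  finally show ?thesis
    by (simp add: diff_divide_distrib)
qed

lemma loglot_payment_ge:
  assumes "0 < a" "a < b"
  shows "(b * s - s\<^sup>2 / 2 - (b * a - a\<^sup>2 / 2)) / loglot_norm a b
    \<le> (\<integral>p. (if p \<le> s then p else 0) \<partial>loglot_measure a b)"
proof -
  have N: "loglot_norm a b > 0"
    using loglot_norm_pos assms by blast
  have "b * s - s\<^sup>2 / 2 \<le> b * a - a\<^sup>2 / 2" if "s < a"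
  proof -
    have "(b * a - a\<^sup>2 / 2) - (b * s - s\<^sup>2 / 2) = (a - s) * (b - (a + s) / 2)"
      by (simp add: power2_eq_square field_simps)
    also have "\<dots> \<ge> 0"
      using that assms by simp
    finally show ?thesis
      by simp
  qed
  moreover have "b * s - s\<^sup>2 / 2 \<le> b * b - b\<^sup>2 / 2"
  proof -
    have "(b * b - b\<^sup>2 / 2) - (b * s - s\<^sup>2 / 2) = (s - b)\<^sup>2 / 2"
      by (simp add: power2_eq_square field_simps)
    also have "\<dots> \<ge> 0"
      by simp
    finally show ?thesis
      by simp
  qed
  ultimately show ?thesis
    unfolding integral_loglot_measure_payment[OF assms] using N
    by (auto simp: min_def divide_right_mono divide_nonpos_pos)
qed

section \<open>Revenue of the bundle sold by the log-lottery\<close>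

lemma ennreal_integral_le_REV:
  assumes "integrable M f" "AE v in M. f v \<le> snd A v"
  shows "ennreal (\<integral>v. f v \<partial>M) \<le> REV M A"
proof -
  have "ennreal (\<integral>v. f v \<partial>M) \<le> ennreal (\<integral>v. max 0 (f v) \<partial>M)"
    using assms(1) by (intro ennreal_leI integral_mono) auto
  also have "\<dots> = (\<integral>\<^sup>+v. ennreal (max 0 (f v)) \<partial>M)"
    using assms(1) by (intro nn_integral_eq_integral[symmetric]) auto
  also have "\<dots> \<le> REV M A"
    unfolding REV_def using assms(2)
    by (intro nn_integral_mono_AE) (auto elim!: eventually_mono intro!: ennreal_leI simp: max_def)
  finally show ?thesis .
qed

lemma (in prob_space) AE_eq_if_second_moment_le:
  fixes X :: "'a \<Rightarrow> real"
  assumes "integrable M X" "integrable M (\<lambda>x. (X x)\<^sup>2)"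
    and "expectation X = \<mu>" "expectation (\<lambda>x. (X x)\<^sup>2) \<le> \<mu>\<^sup>2"
  shows "AE x in M. X x = \<mu>"
proof -
  have "variance X = 0"
    using variance_eq[OF assms(1,2)] variance_positive[of X] assms(3,4) by simp
  moreover have "integrable M (\<lambda>x. (X x - \<mu>)\<^sup>2)"
    using assms(1,2) by (simp add: power2_diff)
  ultimately have "AE x in M. (X x - \<mu>)\<^sup>2 = 0"
    using assms(3) by (subst (asm) integral_nonneg_eq_0_iff_AE) auto
  then show ?thesis
    by simp
qed

lemma REV_bundle_loglot_measure_ge:
  assumes "prob_space M" "0 < a" "1 < u"
    and "integrable M (\<lambda>v. \<Sum>j<m. v j)" "integrable M (\<lambda>v. (\<Sum>j<m. v j)\<^sup>2)"
    and "(\<integral>v. (\<Sum>j<m. v j) \<partial>M) = a * u"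
    and "(\<integral>v. (\<Sum>j<m. v j)\<^sup>2 \<partial>M) \<le> a * (2 * (a * exp (u - 1)) - a)"
  shows "ennreal a \<le> REV M (bundle_mech m (loglot_measure a (a * exp (u - 1))))"
proof -
  interpret prob_space M
    by fact
  define b where "b = a * exp (u - 1)"
  define S where "S v = (\<Sum>j<m. v j)" for v :: "nat \<Rightarrow> real"
  let ?N = "loglot_norm a b"
  let ?Q = "\<lambda>s. (b * s - s\<^sup>2 / 2 - (b * a - a\<^sup>2 / 2)) / ?N"
  have "a < b"
    using assms by (simp add: b_def)
  have N: "?N = b * (u - 1) - (b - a)"
    using \<open>0 < a\<close> by (simp add: loglot_norm_def b_def)
  have "?N > 0"
    using loglot_norm_pos[OF \<open>0 < a\<close> \<open>a < b\<close>] .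
  have int: "integrable M (\<lambda>v. ?Q (S v))"
    using assms(4,5) by (simp add: S_def)
  have "a * ?N \<le> b * (a * u) - (\<integral>v. (S v)\<^sup>2 \<partial>M) / 2 - (b * a - a\<^sup>2 / 2)"
    using assms(7) unfolding N S_def b_def[symmetric] by (simp add: field_simps power2_eq_square)
  also have "\<dots> = ?N * (\<integral>v. ?Q (S v) \<partial>M)"
    using assms(4-6) \<open>?N > 0\<close> by (simp add: S_def prob_space field_simps)
  finally have "a \<le> (\<integral>v. ?Q (S v) \<partial>M)"
    using \<open>?N > 0\<close> by (simp add: pos_le_divide_eq)
  also have "ennreal (\<integral>v. ?Q (S v) \<partial>M) \<le> REV M (bundle_mech m (loglot_measure a b))"
    using int loglot_payment_ge[OF \<open>0 < a\<close> \<open>a < b\<close>]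
    by (intro ennreal_integral_le_REV) (auto simp: bundle_mech_def S_def)
  finally show ?thesis
    unfolding b_def by (simp add: ennreal_leI)
qed

lemma log_lottery_parameters:
  assumes "0 < \<mu>" "0 < \<sigma>"
  obtains a u where "0 < a" "1 < u" "\<mu> = a * u" "rho (\<sigma> / \<mu>) = u"
    and "log_lottery \<mu> \<sigma> = loglot_measure a (a * exp (u - 1))"
    and "a * (2 * (a * exp (u - 1)) - a) = \<mu>\<^sup>2 + \<sigma>\<^sup>2"
proof -
  obtain u where "1 \<le> u" and u: "moment_ratio u = 1 + (\<sigma> / \<mu>)\<^sup>2"
    using moment_ratio_attains[of "1 + (\<sigma> / \<mu>)\<^sup>2"] by auto
  with assms have "1 < u"
    by (cases "u = 1") auto
  define a where "a = \<mu> / u"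
  have "0 < a" "\<mu> = a * u"
    using \<open>1 < u\<close> assms(1) by (simp_all add: a_def)
  then have "a < a * exp (u - 1)"
    using \<open>1 < u\<close> by simp
  have "rho (\<sigma> / \<mu>) = u"
    using \<open>1 < u\<close> u by (intro rho_eqI) simp_all
  moreover have "log_lottery \<mu> \<sigma> = loglot_measure a (a * exp (u - 1))"
    using assms(2) \<open>0 < a\<close> \<open>a < a * exp (u - 1)\<close> \<open>1 < u\<close> loglot_pts_eqI[OF assms(1) _ u, folded a_def]
    by (intro log_lottery_eq_loglot_measure) simp_all
  moreover have "a * (2 * (a * exp (u - 1)) - a) = \<mu>\<^sup>2 + \<sigma>\<^sup>2"
  proof -
    have "a * (2 * (a * exp (u - 1)) - a) = \<mu>\<^sup>2 * moment_ratio u"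
      using moment_ratio_scaled[of u a] \<open>1 < u\<close> \<open>\<mu> = a * u\<close> by simp
    also have "\<dots> = \<mu>\<^sup>2 + \<sigma>\<^sup>2"
      unfolding u using assms(1) by (simp add: field_simps power2_eq_square)
    finally show ?thesis .
  qed
  ultimately show ?thesis
    using that \<open>0 < a\<close> \<open>1 < u\<close> \<open>\<mu> = a * u\<close> by blast
qed

theorem log_lottery_bundle_revenue_ge:
  assumes "prob_space M" "0 < \<mu>" "0 \<le> \<sigma>"
    and "integrable M (\<lambda>v. \<Sum>j<m. v j)" "integrable M (\<lambda>v. (\<Sum>j<m. v j)\<^sup>2)"
    and "(\<integral>v. (\<Sum>j<m. v j) \<partial>M) = \<mu>"
    and "(\<integral>v. (\<Sum>j<m. v j)\<^sup>2 \<partial>M) \<le> \<mu>\<^sup>2 + \<sigma>\<^sup>2"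
  shows "ennreal \<mu> \<le> ennreal (rho (\<sigma> / \<mu>)) * REV M (bundle_mech m (log_lottery \<mu> \<sigma>))"
proof (cases "\<sigma> = 0")
  case True
  interpret prob_space M
    by fact
  have "rho (\<sigma> / \<mu>) = 1"
    using True rho_eqI[of 1] by simp
  moreover have "AE v in M. (\<Sum>j<m. v j) = \<mu>"
    using assms True by (intro AE_eq_if_second_moment_le) auto
  then have "AE v in M. \<mu> \<le> snd (bundle_mech m (return borel \<mu>)) v"
    by eventually_elim (simp add: bundle_mech_def integral_return)
  then have "ennreal (\<integral>v. \<mu> \<partial>M) \<le> REV M (bundle_mech m (return borel \<mu>))"
    by (intro ennreal_integral_le_REV) simp_all
  ultimately show ?thesis
    using True by (simp add: log_lottery_def prob_space)
next
  case False
  with assms(2,3) obtain a u where "0 < a" "1 < u" "\<mu> = a * u" "rho (\<sigma> / \<mu>) = u"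
    and lottery: "log_lottery \<mu> \<sigma> = loglot_measure a (a * exp (u - 1))"
    and "a * (2 * (a * exp (u - 1)) - a) = \<mu>\<^sup>2 + \<sigma>\<^sup>2"
    using log_lottery_parameters[of \<mu> \<sigma>] by auto
  then have "ennreal a \<le> REV M (bundle_mech m (log_lottery \<mu> \<sigma>))"
    using assms by (auto intro!: REV_bundle_loglot_measure_ge)
  then have "ennreal u * ennreal a \<le> ennreal u * REV M (bundle_mech m (log_lottery \<mu> \<sigma>))"
    by (rule mult_left_mono) simp
  then show ?thesis
    using \<open>rho (\<sigma> / \<mu>) = u\<close> \<open>\<mu> = a * u\<close> \<open>0 < a\<close> \<open>1 < u\<close> by (simp add: ennreal_mult mult.commute)
qed

section \<open>Moments of the sum of independent components\<close>

lemma
  fixes f :: "'a \<Rightarrow> 'b::{banach, second_countable_topology}"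
  assumes "\<And>i. i \<in> I \<Longrightarrow> prob_space (F i)" "j \<in> I" "integrable (F j) f"
  shows integrable_PiM_component: "integrable (PiM I F) (\<lambda>v. f (v j))"
    and integral_PiM_component: "(\<integral>v. f (v j) \<partial>PiM I F) = (\<integral>x. f x \<partial>F j)"
proof -
  have component: "(\<lambda>v. v j) \<in> measurable (PiM I F) (F j)"
    using assms(2) by (rule measurable_component_singleton)
  have f: "f \<in> borel_measurable (F j)"
    using assms(3) by simp
  have distr: "distr (PiM I F) (F j) (\<lambda>v. v j) = F j"
    using assms(1,2) by (rule distr_PiM_component)
  show "integrable (PiM I F) (\<lambda>v. f (v j))"
    using integrable_distr_eq[OF component f] distr assms(3) by simp
  show "(\<integral>v. f (v j) \<partial>PiM I F) = (\<integral>x. f x \<partial>F j)"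
    using integral_distr[OF component f] distr by simp
qed

lemma
  fixes F :: "'i \<Rightarrow> real measure"
  assumes "finite I" "\<And>k. k \<in> I \<Longrightarrow> prob_space (F k)" "i \<in> I" "j \<in> I" "i \<noteq> j"
    and "integrable (F i) (\<lambda>x. x)" "integrable (F j) (\<lambda>x. x)"
  shows integrable_PiM_mult_components: "integrable (PiM I F) (\<lambda>v. v i * v j)"
    and integral_PiM_mult_components:
      "(\<integral>v. v i * v j \<partial>PiM I F) = (\<integral>x. x \<partial>F i) * (\<integral>x. x \<partial>F j)"
proof -
  (* Extend F outside I so that the product locale, which quantifies over all indices, applies. *)
  define F' where "F' k = (if k \<in> I then F k else return borel 0)" for k
  have "PiM I F = PiM I F'"
    by (rule PiM_cong) (simp_all add: F'_def)
  interpret product_sigma_finite F'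
    unfolding product_sigma_finite_def F'_def
    using prob_space_return[of 0 borel] by (auto intro: prob_space_imp_sigma_finite assms(2))
  define g where "g k = (if k \<in> {i, j} then (\<lambda>x::real. x) else (\<lambda>_. 1))" for k
  have g: "integrable (F' k) (g k)" if "k \<in> I" for k
  proof -
    interpret prob_space "F k"
      using assms(2) that .
    show ?thesis
      using assms(6,7) that by (cases "k \<in> {i, j}") (auto simp: g_def F'_def)
  qed
  have ij: "I \<inter> {k. k = i \<or> k = j} = {i, j}"
    using assms(3,4) by auto
  have prod_g: "(\<Prod>k\<in>I. g k (v k)) = v i * v j" for v :: "'i \<Rightarrow> real"
    using assms(5) by (simp add: g_def if_distrib[of "\<lambda>h. h _"] prod.If_cases[OF assms(1)] ij)
  have "(\<integral>x. g k x \<partial>F' k) = (if k \<in> {i, j} then \<integral>x. x \<partial>F k else 1)" if "k \<in> I" for k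
    using assms(2) that by (simp add: g_def F'_def prob_space.prob_space)
  then have prod_int: "(\<Prod>k\<in>I. \<integral>x. g k x \<partial>F' k) = (\<integral>x. x \<partial>F i) * (\<integral>x. x \<partial>F j)"
    using assms(5) by (simp add: prod.If_cases[OF assms(1)] ij)
  show "integrable (PiM I F) (\<lambda>v. v i * v j)"
    using product_integrable_prod[OF assms(1) g] \<open>PiM I F = PiM I F'\<close> by (simp add: prod_g)
  show "(\<integral>v. v i * v j \<partial>PiM I F) = (\<integral>x. x \<partial>F i) * (\<integral>x. x \<partial>F j)"
    using product_integral_prod[OF assms(1) g] \<open>PiM I F = PiM I F'\<close> by (simp add: prod_g prod_int)
qed

lemma integrable_id_if_square_integrable:
  fixes M :: "real measure"
  assumes "finite_measure M" "sets M = sets borel" "integrable M (\<lambda>x. x\<^sup>2)"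
  shows "integrable M (\<lambda>x. x)"
proof -
  have "(\<lambda>x. x) \<in> borel_measurable M"
    by (subst measurable_cong_sets[OF assms(2) refl]) simp
  then show ?thesis
    using assms(3) by (rule finite_measure.square_integrable_imp_integrable[OF assms(1)])
qed

lemma
  fixes F :: "'i \<Rightarrow> real measure"
  assumes "finite I" "\<And>k. k \<in> I \<Longrightarrow> prob_space (F k)" "\<And>k. k \<in> I \<Longrightarrow> sets (F k) = sets borel"
    and "\<And>k. k \<in> I \<Longrightarrow> integrable (F k) (\<lambda>x. x\<^sup>2)" and "i \<in> I" "j \<in> I"
  shows integrable_PiM_mixed_moment: "integrable (PiM I F) (\<lambda>v. v i * v j)"
    and integral_PiM_mixed_moment: "(\<integral>v. v i * v j \<partial>PiM I F)
      = (\<integral>x. x \<partial>F i) * (\<integral>x. x \<partial>F j) + (if i = j then prob_space.variance (F j) (\<lambda>x. x) else 0)"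
proof -
  have int: "integrable (F k) (\<lambda>x. x)" if "k \<in> I" for k
    using assms(2-4)[OF that] by (rule integrable_id_if_square_integrable[OF prob_space.axioms(1)])
  have "integrable (PiM I F) (\<lambda>v. v i * v j) \<and> (\<integral>v. v i * v j \<partial>PiM I F)
      = (\<integral>x. x \<partial>F i) * (\<integral>x. x \<partial>F j) + (if i = j then prob_space.variance (F j) (\<lambda>x. x) else 0)"
  proof (cases "i = j")
    case True
    interpret prob_space "F j"
      using assms(2,6) .
    show ?thesis
      using True integrable_PiM_component[OF assms(2,6,4)] integral_PiM_component[OF assms(2,6,4)]
        variance_eq[OF int assms(4)] assms(6) by (simp add: power2_eq_square)
  next
    case False
    then show ?thesis
      using integrable_PiM_mult_components[OF assms(1,2,5,6) False int int]
        integral_PiM_mult_components[OF assms(1,2,5,6) False int int] assms(5,6) by simp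
  qed
  then show "integrable (PiM I F) (\<lambda>v. v i * v j)"
    and "(\<integral>v. v i * v j \<partial>PiM I F)
      = (\<integral>x. x \<partial>F i) * (\<integral>x. x \<partial>F j) + (if i = j then prob_space.variance (F j) (\<lambda>x. x) else 0)"
    by auto
qed

lemma
  fixes F :: "'i \<Rightarrow> real measure"
  assumes "finite I" "\<And>j. j \<in> I \<Longrightarrow> prob_space (F j)" "\<And>j. j \<in> I \<Longrightarrow> sets (F j) = sets borel"
    and "\<And>j. j \<in> I \<Longrightarrow> integrable (F j) (\<lambda>x. x\<^sup>2)"
  shows integrable_PiM_sum_components: "integrable (PiM I F) (\<lambda>v. \<Sum>j\<in>I. v j)"
    and integral_PiM_sum_components: "(\<integral>v. (\<Sum>j\<in>I. v j) \<partial>PiM I F) = (\<Sum>j\<in>I. \<integral>x. x \<partial>F j)"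
    and integrable_PiM_sum_components_square: "integrable (PiM I F) (\<lambda>v. (\<Sum>j\<in>I. v j)\<^sup>2)"
    and integral_PiM_sum_components_square: "(\<integral>v. (\<Sum>j\<in>I. v j)\<^sup>2 \<partial>PiM I F)
      = (\<Sum>j\<in>I. \<integral>x. x \<partial>F j)\<^sup>2 + (\<Sum>j\<in>I. prob_space.variance (F j) (\<lambda>x. x))"
proof -
  let ?M = "PiM I F"
  let ?E = "\<lambda>j. \<integral>x. x \<partial>F j"
  let ?V = "\<lambda>j. prob_space.variance (F j) (\<lambda>x. x)"
  note mixed = integrable_PiM_mixed_moment[OF assms] integral_PiM_mixed_moment[OF assms]
  have int: "integrable (F j) (\<lambda>x. x)" if "j \<in> I" for j
    using assms(2-4)[OF that] by (rule integrable_id_if_square_integrable[OF prob_space.axioms(1)])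
  have components: "integrable ?M (\<lambda>v. v j)" "(\<integral>v. v j \<partial>?M) = ?E j" if "j \<in> I" for j
    using integrable_PiM_component[where I = I and F = F, OF assms(2) that int[OF that]]
      integral_PiM_component[where I = I and F = F, OF assms(2) that int[OF that]] by simp_all
  show "integrable ?M (\<lambda>v. \<Sum>j\<in>I. v j)"
    by (auto intro!: Bochner_Integration.integrable_sum components(1))
  show "(\<integral>v. (\<Sum>j\<in>I. v j) \<partial>?M) = (\<Sum>j\<in>I. ?E j)"
    using components by (subst Bochner_Integration.integral_sum) auto
  have square: "(\<Sum>j\<in>I. v j)\<^sup>2 = (\<Sum>i\<in>I. \<Sum>j\<in>I. v i * v j)" for v :: "'i \<Rightarrow> real"
    by (simp add: power2_eq_square sum_product)
  show "integrable ?M (\<lambda>v. (\<Sum>j\<in>I. v j)\<^sup>2)"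
    unfolding square by (auto intro!: Bochner_Integration.integrable_sum mixed(1))
  have "(\<integral>v. (\<Sum>j\<in>I. v j)\<^sup>2 \<partial>?M) = (\<Sum>i\<in>I. \<Sum>j\<in>I. \<integral>v. v i * v j \<partial>?M)"
    unfolding square using mixed(1)
    by (simp add: Bochner_Integration.integral_sum Bochner_Integration.integrable_sum)
  also have "\<dots> = (\<Sum>i\<in>I. \<Sum>j\<in>I. ?E i * ?E j) + (\<Sum>i\<in>I. \<Sum>j\<in>I. if i = j then ?V j else 0)"
    using mixed(2) by (simp add: sum.distrib)
  also have "\<dots> = (\<Sum>j\<in>I. ?E j)\<^sup>2 + (\<Sum>j\<in>I. ?V j)"
    using assms(1) by (simp add: square[of ?E])
  finally show "(\<integral>v. (\<Sum>j\<in>I. v j)\<^sup>2 \<partial>?M) = (\<Sum>j\<in>I. ?E j)\<^sup>2 + (\<Sum>j\<in>I. ?V j)" .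
qed

section \<open>Optimal revenue and welfare\<close>

lemma truthful_payment_le_welfare:
  assumes "truthful m A" "v \<in> vals m"
  shows "snd A v \<le> (\<Sum>j<m. v j)"
proof -
  have "0 \<le> v j" if "j < m" for j
    using assms(2) that by (auto simp: vals_def)
  moreover have "\<forall>j<m. 0 \<le> fst A v j \<and> fst A v j \<le> 1" "snd A v \<le> (\<Sum>j<m. fst A v j * v j)"
    using assms unfolding truthful_def Let_def by auto
  ultimately have "snd A v \<le> (\<Sum>j<m. fst A v j * v j)" "(\<Sum>j<m. fst A v j * v j) \<le> (\<Sum>j<m. v j)"
    by (auto intro!: sum_mono mult_left_le_one_le)
  then show ?thesis
    by linarith
qed

lemma OPT_le_expected_welfare:
  assumes "AE v in M. v \<in> vals m" "integrable M (\<lambda>v. \<Sum>j<m. v j)"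
  shows "OPT m M \<le> ennreal (\<integral>v. (\<Sum>j<m. v j) \<partial>M)"
  unfolding OPT_def
proof (rule SUP_least)
  fix A assume "A \<in> {A. truthful m A \<and> snd A \<in> borel_measurable M}"
  then have "truthful m A"
    by simp
  have "AE v in M. ennreal (snd A v) \<le> ennreal (\<Sum>j<m. v j)"
    using assms(1) by eventually_elim (auto intro: ennreal_leI truthful_payment_le_welfare[OF \<open>truthful m A\<close>])
  then have "REV M A \<le> (\<integral>\<^sup>+v. ennreal (\<Sum>j<m. v j) \<partial>M)"
    unfolding REV_def by (rule nn_integral_mono_AE)
  also have "\<dots> = ennreal (\<integral>v. (\<Sum>j<m. v j) \<partial>M)"
    using assms(1) by (intro nn_integral_eq_integral[OF assms(2)])
      (auto elim!: eventually_mono simp: vals_def intro!: sum_nonneg)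
  finally show "REV M A \<le> ennreal (\<integral>v. (\<Sum>j<m. v j) \<partial>M)" .
qed

lemma AE_PiM_vals:
  assumes "\<And>j. j < m \<Longrightarrow> prob_space (F j)" "\<And>j. j < m \<Longrightarrow> (AE x in F j. 0 \<le> x)"
  shows "AE v in PiM {..<m} F. v \<in> vals m"
proof -
  have "AE v in PiM {..<m} F. \<forall>j\<in>{..<m}. 0 \<le> v j"
    using assms by (intro eventually_ball_finite ballI AE_PiM_component) auto
  then show ?thesis
    by (rule AE_mp) (auto intro!: AE_I2 simp: vals_def space_PiM PiE_def Pi_def)
qed

lemma sqrt_mult_divide_mult:
  fixes n x y :: real
  assumes "0 < n"
  shows "sqrt n * x / (n * y) = x / y / sqrt n"
proof -
  define r where "r = sqrt n"
  have "0 < r" "n = r * r"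
    using assms by (simp_all add: r_def)
  then show ?thesis
    unfolding r_def[symmetric] by (simp add: field_simps)
qed

theorem corollary1:
  fixes m :: nat and \<mu> \<sigma> :: real and F :: "nat \<Rightarrow> real measure"
  assumes "m \<ge> 1" and "\<mu> > 0" and "\<sigma> \<ge> 0"
    and "\<And>j. j < m \<Longrightarrow> prob_space (F j)"
    and "\<And>j. j < m \<Longrightarrow> sets (F j) = sets borel"
    and "\<And>j. j < m \<Longrightarrow> (AE x in F j. 0 \<le> x)"
    and "\<And>j. j < m \<Longrightarrow> integrable (F j) (\<lambda>x. x\<^sup>2)"
    and "\<And>j. j < m \<Longrightarrow> prob_space.expectation (F j) (\<lambda>x. x) = \<mu>"
    and "\<And>j. j < m \<Longrightarrow> prob_space.variance (F j) (\<lambda>x. x) \<le> \<sigma>\<^sup>2"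
  shows "OPT m (PiM {..<m} F)
         \<le> ennreal (rho ((\<sigma> / \<mu>) / sqrt (real m)))
            * REV (PiM {..<m} F) (bundle_mech m (log_lottery (real m * \<mu>) (sqrt (real m) * \<sigma>)))"
proof -
  let ?M = "PiM {..<m} F"
  let ?S = "\<lambda>v. \<Sum>j<m. v j"
  note moments = integrable_PiM_sum_components integral_PiM_sum_components
    integrable_PiM_sum_components_square integral_PiM_sum_components_square
  note moment_assms = finite_lessThan[of m] assms(4,5,7)[unfolded lessThan_iff[symmetric]]
  have int: "integrable ?M ?S" "integrable ?M (\<lambda>v. (?S v)\<^sup>2)"
    using moments(1,3)[OF moment_assms] by simp_all
  have mean: "(\<integral>v. ?S v \<partial>?M) = real m * \<mu>"
    using moments(2)[OF moment_assms] assms(8) by simp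
  have "(\<integral>v. (?S v)\<^sup>2 \<partial>?M) \<le> (real m * \<mu>)\<^sup>2 + real m * \<sigma>\<^sup>2"
    using moments(4)[OF moment_assms] sum_mono[of "{..<m}" _ "\<lambda>_. \<sigma>\<^sup>2"] assms(8,9) by simp
  then have "ennreal (real m * \<mu>) \<le> ennreal (rho ((sqrt (real m) * \<sigma>) / (real m * \<mu>)))
      * REV ?M (bundle_mech m (log_lottery (real m * \<mu>) (sqrt (real m) * \<sigma>)))"
    using assms(1-4) int mean
    by (intro log_lottery_bundle_revenue_ge prob_space_PiM) (simp_all add: power_mult_distrib)
  moreover have "sqrt (real m) * \<sigma> / (real m * \<mu>) = \<sigma> / \<mu> / sqrt (real m)"
    using assms(1) by (intro sqrt_mult_divide_mult) simp
  moreover have "OPT m ?M \<le> ennreal (real m * \<mu>)"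
    using OPT_le_expected_welfare[OF AE_PiM_vals[OF assms(4,6)] int(1)] mean by simp
  ultimately show ?thesis
    by (metis order.trans)
qed

end
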